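(* Under Assumption A, there exists $P\in\Pi(\mu,\nu)$ with $H(P|\mu\otimes\nu)<\infty$ such that, for $\mu$-a.e. $x$, $$\int(y-x)\,P_x(dy)>0\ \text{ if }x\ge0,\qquad \int(y-x)\,P_x(dy)<0\ \text{ if }x<0.$$
   Context: Standing setting: $\mu,\nu$ are Borel probability measures on $\mathbb{R}$ with finite first moments, in convex order, centered ($\int x\,\mu(dx)=\int y\,\nu(dy)=0$), and $\mu\neq\delta_0$. $\Pi(\mu,\nu)$: couplings; $P_x$: disintegration kernel of $P$ w.r.t. its first marginal; $\mathcal{M}(\mu,\nu)$: martingale couplings ($\int(y-x)\pi_x(dy)=0$ $\mu$-a.s.); $H$ is relative entropy ($+\infty$ if not absolutely continuous). Assumption A: there exists $\bar\pi\in\mathcal{M}(\mu,\nu)$ equivalent to $\mu\otimes\nu$ with $H(\bar\pi|\mu\otimes\nu)<\infty$. *)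

theory Defs
  imports "HOL-Probability.Probability"
begin

definition convex_order :: "real measure \<Rightarrow> real measure \<Rightarrow> bool" where
  "convex_order \<mu> \<nu> \<longleftrightarrow>
     (\<forall>f::real \<Rightarrow> real. convex_on UNIV f \<longrightarrow> integrable \<mu> f \<longrightarrow> integrable \<nu> f \<longrightarrow>
        (\<integral>x. f x \<partial>\<mu>) \<le> (\<integral>y. f y \<partial>\<nu>))"

definition is_coupling :: "real measure \<Rightarrow> real measure \<Rightarrow> (real \<times> real) measure \<Rightarrow> bool" where
  "is_coupling \<mu> \<nu> P \<longleftrightarrow> prob_space P \<and> sets P = sets (borel \<Otimes>\<^sub>M borel) \<and>
     distr P borel fst = \<mu> \<and> distr P borel snd = \<nu>"

definition is_disintegration :: "real measure \<Rightarrow> (real \<Rightarrow> real measure) \<Rightarrow> (real \<times> real) measure \<Rightarrow> bool" where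
  "is_disintegration \<mu> K P \<longleftrightarrow> K \<in> \<mu> \<rightarrow>\<^sub>M prob_algebra borel \<and>
     (\<forall>A\<in>sets borel. \<forall>B\<in>sets borel. emeasure P (A \<times> B) = (\<integral>\<^sup>+x\<in>A. emeasure (K x) B \<partial>\<mu>))"

definition is_martingale_coupling :: "real measure \<Rightarrow> real measure \<Rightarrow> (real \<times> real) measure \<Rightarrow> bool" where
  "is_martingale_coupling \<mu> \<nu> P \<longleftrightarrow> is_coupling \<mu> \<nu> P \<and>
     (\<exists>K. is_disintegration \<mu> K P \<and>
        (AE x in \<mu>. integrable (K x) (\<lambda>y. y - x) \<and> (\<integral>y. (y - x) \<partial>K x) = 0))"

text \<open>The integral is split into positive and negative parts (the negative part is finite for
  finite Q since f ln f >= -1/e).\<close>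
definition rel_entropy :: "'a measure \<Rightarrow> 'a measure \<Rightarrow> ereal" where
  "rel_entropy P Q =
     (if sets P = sets Q \<and> absolutely_continuous Q P then
        (let f = (\<lambda>z. enn2real (RN_deriv Q P z)) in
           enn2ereal (\<integral>\<^sup>+z. ennreal (f z * ln (f z)) \<partial>Q)
           - enn2ereal (\<integral>\<^sup>+z. ennreal (- (f z * ln (f z))) \<partial>Q))
      else \<infinity>)"

end

theory Submission
  imports Defs
begin

text \<open>
  Write the martingale coupling of Assumption A as \<open>\<pi> = p (\<mu> \<Otimes> \<nu>)\<close>. Since \<open>\<pi>\<close> and \<open>\<mu> \<Otimes> \<nu>\<close>
  are equivalent, \<open>p > 0\<close> almost everywhere; its rows and columns are probability densities
  and the row over \<open>x\<close> has barycentre \<open>x\<close>. Now move mass between the quadrants: each row over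
  \<open>x \<ge> 0\<close> gives up the fraction \<open>c = \<pi>({x < 0} \<times> {y > 0})\<close> of its mass on \<open>{y \<le> 0}\<close> and
  receives the same amount on \<open>{y > 0}\<close>, distributed like \<open>\<pi>({x < 0} \<times> dy)\<close>; the rows over
  \<open>x < 0\<close> make the mirror move. Both strips trade the same total mass, so both marginals are
  preserved, and the new density is at most \<open>p + 1\<close>, so the relative entropy stays finite.
  The new drift of a row over \<open>x \<ge> 0\<close> is \<open>-c E[Y; Y \<le> 0]\<close> plus a multiple of a strictly positive
  moment; positivity comes from \<open>p > 0\<close> and from \<open>\<mu>\<close>, hence \<open>\<nu>\<close>, charging both half-lines.
\<close>

section \<open>Integrals and relative entropy\<close>

lemma integral_pos_of_not_AE_eq_0:
  fixes f :: "'a \<Rightarrow> real"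
  assumes "integrable M f" and "AE x in M. 0 \<le> f x" and "\<not> (AE x in M. f x = 0)"
  shows "0 < integral\<^sup>L M f"
  using integral_nonneg_eq_0_iff_AE[OF assms(1,2)] integral_nonneg_AE[OF assms(2)] assms(3) by auto

lemma integrable_integral_eq_0_iff:
  fixes f :: "'a \<Rightarrow> real"
  assumes "f \<in> borel_measurable M"
  shows "integrable M f \<and> integral\<^sup>L M f = 0 \<longleftrightarrow>
    (\<integral>\<^sup>+x. ennreal (f x) \<partial>M) = (\<integral>\<^sup>+x. ennreal (- f x) \<partial>M) \<and> (\<integral>\<^sup>+x. ennreal (f x) \<partial>M) \<noteq> \<infinity>"
    (is "_ \<longleftrightarrow> ?pos = ?neg \<and> _")
proof
  assume int: "integrable M f \<and> integral\<^sup>L M f = 0"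
  then have fin: "?pos \<noteq> \<infinity>" "?neg \<noteq> \<infinity>"
    by (simp_all add: real_integrable_def)
  have "ennreal (enn2real ?pos) = ennreal (enn2real ?neg)"
    using int real_lebesgue_integral_def[of M f] by simp
  then show "?pos = ?neg \<and> ?pos \<noteq> \<infinity>"
    using fin by (simp add: ennreal_enn2real_if)
next
  assume parts: "?pos = ?neg \<and> ?pos \<noteq> \<infinity>"
  then have "integrable M f"
    using assms unfolding real_integrable_def by (elim conjE) (simp only:, simp)
  then show "integrable M f \<and> integral\<^sup>L M f = 0"
    using parts real_lebesgue_integral_def[of M f] by simp
qed

lemma return_eq_of_AE_eq:
  assumes "prob_space M" and sets_M: "sets M = sets borel" and AE: "AE x in M. x = c"
  shows "M = return borel c"
proof (rule measure_eqI)
  fix A assume "A \<in> sets M"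
  then have "emeasure M A = (\<integral>\<^sup>+x. indicator A x \<partial>M)"
    by simp
  also have "\<dots> = (\<integral>\<^sup>+x. indicator A c \<partial>M)"
    by (rule nn_integral_cong_AE) (use AE in \<open>auto elim!: eventually_mono\<close>)
  also have "\<dots> = emeasure (return borel c) A"
    using \<open>A \<in> sets M\<close> sets_M prob_space.emeasure_space_1[OF \<open>prob_space M\<close>] by simp
  finally show "emeasure M A = emeasure (return borel c) A" .
qed (simp add: sets_M)

lemma centered_not_AE_nonneg:
  fixes M :: "real measure"
  assumes "prob_space M" and "sets M = sets borel" and int: "integrable M (\<lambda>x. x)"
    and mean: "(\<integral>x. x \<partial>M) = 0" and "M \<noteq> return borel 0"
  shows "\<not> (AE x in M. 0 \<le> x)" and "\<not> (AE x in M. x \<le> 0)"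
proof -
  have not_AE_0: "\<not> (AE x in M. x = 0)"
    using return_eq_of_AE_eq assms(1,2,5) by blast
  show "\<not> (AE x in M. 0 \<le> x)"
    using integral_nonneg_eq_0_iff_AE[OF int] mean not_AE_0 by auto
  show "\<not> (AE x in M. x \<le> 0)"
    using integral_nonneg_eq_0_iff_AE[of M "\<lambda>x. - x"] int mean not_AE_0 by auto
qed

lemma AE_pos_of_absolutely_continuous_density:
  assumes g[measurable]: "g \<in> borel_measurable M" and g_nonneg: "\<And>z. 0 \<le> g z"
    and ac: "absolutely_continuous (density M (\<lambda>z. ennreal (g z))) M"
  shows "AE z in M. 0 < g z"
proof -
  let ?Z = "{z \<in> space M. g z = 0}"
  have "?Z \<in> null_sets (density M (\<lambda>z. ennreal (g z)))"
    by (auto simp: null_sets_density_iff intro!: AE_I2)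
  then have "?Z \<in> null_sets M"
    using ac by (auto simp: absolutely_continuous_def)
  then show ?thesis
    by (rule AE_I') (auto simp: less_le g_nonneg)
qed

lemma mult_ln_le_of_le_add_one:
  fixes t q :: real
  assumes "0 \<le> t" and t_le: "t \<le> q + 1" and "0 \<le> q"
  shows "t * ln t \<le> 2 * max 0 (q * ln q) + q + 2"
proof (cases "t \<le> 1")
  case True
  then have "t * ln t \<le> 0"
    using \<open>0 \<le> t\<close> by (cases "t = 0") (auto intro: mult_nonneg_nonpos)
  then show ?thesis using \<open>0 \<le> q\<close> by simp
next
  case False
  have "t * ln t \<le> (q + 1) * ln (q + 1)"
    using False t_le by (intro mult_mono) auto
  also have "\<dots> \<le> 2 * max 0 (q * ln q) + q + 2"
  proof (cases "q \<le> 1")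
    case True
    have "(q + 1) * ln (q + 1) \<le> 2 * 1"
      using True \<open>0 \<le> q\<close> ln_le_minus_one[of "q + 1"] by (intro mult_mono) auto
    then show ?thesis using \<open>0 \<le> q\<close> by simp
  next
    case False
    have "ln (q + 1) \<le> ln (2 * q)"
      using False by simp
    also have "\<dots> \<le> 1 + ln q"
      using False ln_le_minus_one[of 2] by (simp add: ln_mult)
    finally have "(q + 1) * ln (q + 1) \<le> (q + 1) * (1 + ln q)"
      using \<open>0 \<le> q\<close> by (intro mult_left_mono) auto
    also have "\<dots> \<le> q + 1 + 2 * (q * ln q)"
      using False mult_right_mono[of 1 q "ln q"] by (simp add: algebra_simps)
    finally show ?thesis by simp
  qed
  finally show ?thesis .
qed

lemma neg_mult_ln_le_one:
  fixes t :: real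
  assumes "0 \<le> t"
  shows "- (t * ln t) \<le> 1"
proof (cases "t = 0")
  case False
  then have "0 < t" using assms by simp
  have "t * - ln t \<le> t * (1 / t - 1)"
    using ln_le_minus_one[of "1 / t"] \<open>0 < t\<close> by (intro mult_left_mono) (auto simp: ln_div)
  also have "\<dots> = 1 - t"
    using \<open>0 < t\<close> by (simp add: right_diff_distrib)
  finally show ?thesis using \<open>0 < t\<close> by simp
qed simp

lemma rel_entropy_density_less_top_iff:
  assumes "finite_measure Q" and g[measurable]: "g \<in> borel_measurable Q" and g_nonneg: "\<And>z. 0 \<le> g z"
  shows "rel_entropy (density Q (\<lambda>z. ennreal (g z))) Q < \<infinity> \<longleftrightarrow>
    (\<integral>\<^sup>+z. ennreal (g z * ln (g z)) \<partial>Q) < \<infinity>"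
proof -
  interpret finite_measure Q by fact
  let ?P = "density Q (\<lambda>z. ennreal (g z))"
  let ?pos = "\<lambda>g. \<integral>\<^sup>+z. ennreal (g z * ln (g z)) \<partial>Q"
  let ?neg = "\<lambda>g. \<integral>\<^sup>+z. ennreal (- (g z * ln (g z))) \<partial>Q"
  have "AE z in Q. ennreal (g z) = RN_deriv Q ?P z"
    by (rule RN_deriv_unique) auto
  then have "AE z in Q. enn2real (RN_deriv Q ?P z) = g z"
    by eventually_elim (metis enn2real_ennreal g_nonneg)
  then have RN: "?pos (\<lambda>z. enn2real (RN_deriv Q ?P z)) = ?pos g"
    "?neg (\<lambda>z. enn2real (RN_deriv Q ?P z)) = ?neg g"
    by (auto intro!: nn_integral_cong_AE elim!: eventually_mono)
  have "?neg g \<le> (\<integral>\<^sup>+z. 1 \<partial>Q)"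
    using neg_mult_ln_le_one[OF g_nonneg] by (intro nn_integral_mono) (simp add: ennreal_leI)
  then obtain r where r: "enn2ereal (?neg g) = ereal r"
    using emeasure_real by (cases "enn2ereal (?neg g)") (auto simp: top_unique)
  have "rel_entropy ?P Q = enn2ereal (?pos g) - enn2ereal (?neg g)"
    unfolding rel_entropy_def by (simp add: absolutely_continuousI_density Let_def RN)
  then show ?thesis
    using r by (cases "?pos g") (auto simp: less_top)
qed

lemma nn_integral_mult_ln_less_top_of_le:
  assumes "finite_measure Q"
    and [measurable]: "g \<in> borel_measurable Q" "h \<in> borel_measurable Q"
    and g_nonneg: "\<And>z. 0 \<le> g z" and h_nonneg: "\<And>z. 0 \<le> h z"
    and g_le: "AE z in Q. g z \<le> h z + 1"
    and "integrable Q h" and h_ent: "(\<integral>\<^sup>+z. ennreal (h z * ln (h z)) \<partial>Q) < \<infinity>"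
  shows "(\<integral>\<^sup>+z. ennreal (g z * ln (g z)) \<partial>Q) < \<infinity>"
proof -
  interpret finite_measure Q by fact
  have "(\<integral>\<^sup>+z. ennreal (g z * ln (g z)) \<partial>Q)
      \<le> (\<integral>\<^sup>+z. 2 * ennreal (h z * ln (h z)) + ennreal (h z) + 2 \<partial>Q)"
  proof (intro nn_integral_mono_AE, use g_le in eventually_elim)
    case (elim z)
    have "ennreal (g z * ln (g z)) \<le> ennreal (2 * max 0 (h z * ln (h z)) + h z + 2)"
      using elim g_nonneg h_nonneg by (intro ennreal_leI mult_ln_le_of_le_add_one) auto
    also have "\<dots> = 2 * ennreal (h z * ln (h z)) + ennreal (h z) + 2"
      using h_nonneg[of z] by (simp add: ennreal_plus ennreal_mult ennreal_max_0 del: ennreal_numeral) simp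
    finally show ?case .
  qed
  also have "\<dots> = 2 * (\<integral>\<^sup>+z. ennreal (h z * ln (h z)) \<partial>Q) + (\<integral>\<^sup>+z. ennreal (h z) \<partial>Q) + 2 * emeasure Q (space Q)"
    by (simp add: nn_integral_add nn_integral_cmult)
  also have "\<dots> < \<infinity>"
    using h_ent integrableD(2)[OF \<open>integrable Q h\<close>] h_nonneg
    by (simp add: ennreal_mult_eq_top_iff less_top[symmetric] emeasure_finite)
  finally show ?thesis .
qed

section \<open>Disintegrations\<close>

lemma measure_eqI_pair_rectangles:
  assumes sets_M: "sets M = sets (M1 \<Otimes>\<^sub>M M2)" and sets_N: "sets N = sets (M1 \<Otimes>\<^sub>M M2)"
    and "finite_measure M"
    and eq: "\<And>A B. A \<in> sets M1 \<Longrightarrow> B \<in> sets M2 \<Longrightarrow> emeasure M (A \<times> B) = emeasure N (A \<times> B)"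
  shows "M = N"
proof (rule measure_eqI_generator_eq_countable[OF Int_stable_pair_measure_generator,
      where \<Omega> = "space M1 \<times> space M2" and A = "{space M1 \<times> space M2}"])
  show "{a \<times> b |a b. a \<in> sets M1 \<and> b \<in> sets M2} \<subseteq> Pow (space M1 \<times> space M2)"
    by (auto dest: sets.sets_into_space)
  show "sets M = sigma_sets (space M1 \<times> space M2) {a \<times> b |a b. a \<in> sets M1 \<and> b \<in> sets M2}"
    "sets N = sigma_sets (space M1 \<times> space M2) {a \<times> b |a b. a \<in> sets M1 \<and> b \<in> sets M2}"
    using sets_M sets_N by (simp_all add: sets_pair_measure)
  show "emeasure M X = emeasure N X" if "X \<in> {a \<times> b |a b. a \<in> sets M1 \<and> b \<in> sets M2}" for X
    using that eq by auto
  show "emeasure M X \<noteq> \<infinity>" for X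
    using finite_measure.emeasure_finite[OF \<open>finite_measure M\<close>] by simp
qed auto

lemma nn_integral_disintegration:
  assumes dis: "is_disintegration \<mu> K P" and sets_\<mu>: "sets \<mu> = sets borel"
    and sets_P: "sets P = sets (borel \<Otimes>\<^sub>M borel)" and "finite_measure P"
    and g[measurable]: "g \<in> borel_measurable (borel \<Otimes>\<^sub>M borel)"
  shows "(\<integral>\<^sup>+z. g z \<partial>P) = (\<integral>\<^sup>+x. \<integral>\<^sup>+y. g (x, y) \<partial>K x \<partial>\<mu>)"
proof -
  have K[measurable]: "K \<in> \<mu> \<rightarrow>\<^sub>M subprob_algebra borel"
    using dis by (auto simp: is_disintegration_def intro: measurable_prob_algebraD)
  have sets_K: "sets (K x) = sets borel" if "x \<in> space \<mu>" for x
    using sets_kernel[OF K that] .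
  define Q where "Q x = distr (K x) (borel \<Otimes>\<^sub>M borel) (Pair x)" for x
  have Q[measurable]: "Q \<in> \<mu> \<rightarrow>\<^sub>M subprob_algebra (borel \<Otimes>\<^sub>M borel)"
    unfolding Q_def
    by (rule measurable_distr2[OF _ K])
      (simp add: measurable_ident_sets[OF sets_pair_measure_cong[OF sets_\<mu> refl]] case_prod_beta')
  have space_\<mu>: "space \<mu> = UNIV"
    using sets_eq_imp_space_eq[OF sets_\<mu>] by simp
  have "P = \<mu> \<bind> Q"
  proof (rule measure_eqI_pair_rectangles[OF sets_P _ \<open>finite_measure P\<close>])
    show "sets (\<mu> \<bind> Q) = sets (borel \<Otimes>\<^sub>M borel)"
      by (rule sets_bind[OF sets_kernel[OF Q]]) (simp_all add: space_\<mu>)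
    fix A B :: "real set" assume [measurable]: "A \<in> sets borel" "B \<in> sets borel"
    have "emeasure (Q x) (A \<times> B) = emeasure (K x) B * indicator A x" for x
      using sets_K[of x] sets_eq_imp_space_eq[OF sets_K[of x]]
      by (simp add: Q_def space_\<mu> emeasure_distr measurable_cong_sets[OF sets_K refl] vimage_def
          split: split_indicator)
    then show "emeasure P (A \<times> B) = emeasure (\<mu> \<bind> Q) (A \<times> B)"
      using dis by (simp add: is_disintegration_def emeasure_bind[OF _ Q] space_\<mu>)
  qed
  then have "(\<integral>\<^sup>+z. g z \<partial>P) = (\<integral>\<^sup>+x. \<integral>\<^sup>+z. g z \<partial>Q x \<partial>\<mu>)"
    by (simp add: nn_integral_bind[OF g Q])
  also have "\<dots> = (\<integral>\<^sup>+x. \<integral>\<^sup>+y. g (x, y) \<partial>K x \<partial>\<mu>)"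
    by (intro nn_integral_cong)
      (simp add: Q_def nn_integral_distr measurable_cong_sets[OF sets_K refl])
  finally show ?thesis .
qed

section \<open>Couplings with a density\<close>

text \<open>The fallback \<open>return borel 0\<close> is only used on a \<open>\<mu>\<close>-null set of rows; it makes the kernel
  a probability kernel everywhere.\<close>

definition section_kernel :: "real measure \<Rightarrow> (real \<times> real \<Rightarrow> real) \<Rightarrow> real \<Rightarrow> real measure" where
  "section_kernel \<nu> f x =
    (if (\<integral>\<^sup>+y. ennreal (f (x, y)) \<partial>\<nu>) = 1 then density \<nu> (\<lambda>y. ennreal (f (x, y)))
     else return borel 0)"

locale real_pair_prob_space = pair_prob_space \<mu> \<nu> for \<mu> \<nu> :: "real measure" +
  assumes sets_\<mu>[measurable_cong]: "sets \<mu> = sets borel"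
    and sets_\<nu>[measurable_cong]: "sets \<nu> = sets borel"
begin

lemma space_\<mu>: "space \<mu> = UNIV"
  using sets_eq_imp_space_eq[OF sets_\<mu>] by simp

lemma space_\<nu>: "space \<nu> = UNIV"
  using sets_eq_imp_space_eq[OF sets_\<nu>] by simp

lemma sets_pair[measurable_cong]: "sets (\<mu> \<Otimes>\<^sub>M \<nu>) = sets (borel \<Otimes>\<^sub>M borel)"
  by (rule sets_pair_measure_cong[OF sets_\<mu> sets_\<nu>])

lemma finite_measure_pair: "finite_measure (\<mu> \<Otimes>\<^sub>M \<nu>)"
  using P.emeasure_space_1 by (intro finite_measureI) simp

lemma measurable_section_snd[measurable]:
  "f \<in> borel_measurable (\<mu> \<Otimes>\<^sub>M \<nu>) \<Longrightarrow> (\<lambda>y. f (x, y)) \<in> borel_measurable \<nu>"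
  using measurable_Pair2[of f \<mu> \<nu> borel x] by (simp add: space_\<mu>)

lemma measurable_section_fst[measurable]:
  "f \<in> borel_measurable (\<mu> \<Otimes>\<^sub>M \<nu>) \<Longrightarrow> (\<lambda>x. f (x, y)) \<in> borel_measurable \<mu>"
  using measurable_Pair1[of f \<mu> \<nu> borel y] by (simp add: space_\<nu>)

lemma nn_integral_density_pair:
  assumes [measurable]: "p \<in> borel_measurable (\<mu> \<Otimes>\<^sub>M \<nu>)" "g \<in> borel_measurable (\<mu> \<Otimes>\<^sub>M \<nu>)"
  shows "(\<integral>\<^sup>+z. g z \<partial>density (\<mu> \<Otimes>\<^sub>M \<nu>) (\<lambda>z. ennreal (p z)))
    = (\<integral>\<^sup>+x. \<integral>\<^sup>+y. ennreal (p (x, y)) * g (x, y) \<partial>\<nu> \<partial>\<mu>)"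
  using M2.nn_integral_fst[of "\<lambda>z. ennreal (p z) * g z" \<mu>] by (simp add: nn_integral_density)

lemma emeasure_distr_fst_density:
  assumes [measurable]: "f \<in> borel_measurable (\<mu> \<Otimes>\<^sub>M \<nu>)" "A \<in> sets borel"
  shows "emeasure (distr (density (\<mu> \<Otimes>\<^sub>M \<nu>) (\<lambda>z. ennreal (f z))) borel fst) A
    = (\<integral>\<^sup>+x. (\<integral>\<^sup>+y. ennreal (f (x, y)) \<partial>\<nu>) * indicator A x \<partial>\<mu>)"
proof -
  have "emeasure (distr (density (\<mu> \<Otimes>\<^sub>M \<nu>) (\<lambda>z. ennreal (f z))) borel fst) A
      = emeasure (density (\<mu> \<Otimes>\<^sub>M \<nu>) (\<lambda>z. ennreal (f z))) (A \<times> UNIV)"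
    by (simp add: emeasure_distr space_pair_measure space_\<mu> space_\<nu> vimage_fst)
  also have "\<dots> = (\<integral>\<^sup>+z. ennreal (f z) * indicator A (fst z) \<partial>\<mu> \<Otimes>\<^sub>M \<nu>)"
    by (subst emeasure_density) (auto intro!: nn_integral_cong split: split_indicator)
  also have "\<dots> = (\<integral>\<^sup>+x. (\<integral>\<^sup>+y. ennreal (f (x, y)) \<partial>\<nu>) * indicator A x \<partial>\<mu>)"
    by (simp add: M2.nn_integral_fst[symmetric] nn_integral_multc)
  finally show ?thesis .
qed

lemma emeasure_distr_snd_density:
  assumes [measurable]: "f \<in> borel_measurable (\<mu> \<Otimes>\<^sub>M \<nu>)" "B \<in> sets borel"
  shows "emeasure (distr (density (\<mu> \<Otimes>\<^sub>M \<nu>) (\<lambda>z. ennreal (f z))) borel snd) B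
    = (\<integral>\<^sup>+y. (\<integral>\<^sup>+x. ennreal (f (x, y)) \<partial>\<mu>) * indicator B y \<partial>\<nu>)"
proof -
  have "emeasure (distr (density (\<mu> \<Otimes>\<^sub>M \<nu>) (\<lambda>z. ennreal (f z))) borel snd) B
      = emeasure (density (\<mu> \<Otimes>\<^sub>M \<nu>) (\<lambda>z. ennreal (f z))) (UNIV \<times> B)"
    by (simp add: emeasure_distr space_pair_measure space_\<mu> space_\<nu> vimage_snd)
  also have "\<dots> = (\<integral>\<^sup>+z. ennreal (f z) * indicator B (snd z) \<partial>\<mu> \<Otimes>\<^sub>M \<nu>)"
    by (subst emeasure_density) (auto intro!: nn_integral_cong split: split_indicator)
  also have "\<dots> = (\<integral>\<^sup>+y. (\<integral>\<^sup>+x. ennreal (f (x, y)) \<partial>\<mu>) * indicator B y \<partial>\<nu>)"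
    by (simp add: nn_integral_snd[symmetric] nn_integral_multc)
  finally show ?thesis .
qed

lemma density_coupling:
  assumes f[measurable]: "f \<in> borel_measurable (\<mu> \<Otimes>\<^sub>M \<nu>)"
    and row: "AE x in \<mu>. (\<integral>\<^sup>+y. ennreal (f (x, y)) \<partial>\<nu>) = 1"
    and col: "AE y in \<nu>. (\<integral>\<^sup>+x. ennreal (f (x, y)) \<partial>\<mu>) = 1"
  shows "is_coupling \<mu> \<nu> (density (\<mu> \<Otimes>\<^sub>M \<nu>) (\<lambda>z. ennreal (f z)))"
proof -
  let ?P = "density (\<mu> \<Otimes>\<^sub>M \<nu>) (\<lambda>z. ennreal (f z))"
  have fst: "distr ?P borel fst = \<mu>"
  proof (rule measure_eqI)
    fix A :: "real set" assume "A \<in> sets (distr ?P borel fst)"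
    then have A: "A \<in> sets borel" by simp
    have "emeasure (distr ?P borel fst) A = (\<integral>\<^sup>+x. indicator A x \<partial>\<mu>)"
      unfolding emeasure_distr_fst_density[OF f A]
      by (rule nn_integral_cong_AE) (use row in \<open>auto elim!: eventually_mono\<close>)
    then show "emeasure (distr ?P borel fst) A = emeasure \<mu> A"
      using A by (simp add: sets_\<mu>)
  qed (simp add: sets_\<mu>)
  have snd: "distr ?P borel snd = \<nu>"
  proof (rule measure_eqI)
    fix B :: "real set" assume "B \<in> sets (distr ?P borel snd)"
    then have B: "B \<in> sets borel" by simp
    have "emeasure (distr ?P borel snd) B = (\<integral>\<^sup>+y. indicator B y \<partial>\<nu>)"
      unfolding emeasure_distr_snd_density[OF f B]
      by (rule nn_integral_cong_AE) (use col in \<open>auto elim!: eventually_mono\<close>)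
    then show "emeasure (distr ?P borel snd) B = emeasure \<nu> B"
      using B by (simp add: sets_\<nu>)
  qed (simp add: sets_\<nu>)
  have "prob_space ?P"
  proof
    have "emeasure ?P (space ?P) = emeasure (distr ?P borel fst) UNIV"
      by (simp add: emeasure_distr space_pair_measure)
    then show "emeasure ?P (space ?P) = 1"
      using M1.emeasure_space_1 by (simp add: fst space_\<mu>)
  qed
  with fst snd show ?thesis
    by (simp add: is_coupling_def sets_pair)
qed

lemma section_kernel_prob_algebra:
  assumes [measurable]: "f \<in> borel_measurable (\<mu> \<Otimes>\<^sub>M \<nu>)"
  shows "section_kernel \<nu> f \<in> \<mu> \<rightarrow>\<^sub>M prob_algebra borel"
proof (rule measurable_prob_algebraI)
  have prob: "prob_space (section_kernel \<nu> f x)" for x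
    by (auto simp: section_kernel_def prob_space_return emeasure_density space_\<nu> intro!: prob_spaceI)
  then show "prob_space (section_kernel \<nu> f x)" for x .
  show "section_kernel \<nu> f \<in> \<mu> \<rightarrow>\<^sub>M subprob_algebra borel"
  proof (rule measurable_subprob_algebra)
    show "subprob_space (section_kernel \<nu> f x)" for x
      using prob by (rule prob_space_imp_subprob_space)
    show "sets (section_kernel \<nu> f x) = sets borel" for x
      by (simp add: section_kernel_def sets_\<nu>)
    fix A :: "real set" assume [measurable]: "A \<in> sets borel"
    have "emeasure (section_kernel \<nu> f x) A = (if (\<integral>\<^sup>+y. ennreal (f (x, y)) \<partial>\<nu>) = 1
        then \<integral>\<^sup>+y. ennreal (f (x, y)) * indicator A y \<partial>\<nu> else indicator A 0)" for x
      by (simp add: section_kernel_def emeasure_density)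
    then show "(\<lambda>x. emeasure (section_kernel \<nu> f x) A) \<in> borel_measurable \<mu>"
      by simp
  qed
qed

lemma density_disintegration:
  assumes f[measurable]: "f \<in> borel_measurable (\<mu> \<Otimes>\<^sub>M \<nu>)"
    and row: "AE x in \<mu>. (\<integral>\<^sup>+y. ennreal (f (x, y)) \<partial>\<nu>) = 1"
  shows "is_disintegration \<mu> (section_kernel \<nu> f) (density (\<mu> \<Otimes>\<^sub>M \<nu>) (\<lambda>z. ennreal (f z)))"
  unfolding is_disintegration_def
proof (intro conjI section_kernel_prob_algebra[OF f] ballI)
  fix A B :: "real set" assume [measurable]: "A \<in> sets borel" "B \<in> sets borel"
  have "emeasure (density (\<mu> \<Otimes>\<^sub>M \<nu>) (\<lambda>z. ennreal (f z))) (A \<times> B)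
      = (\<integral>\<^sup>+x. \<integral>\<^sup>+y. ennreal (f (x, y)) * indicator (A \<times> B) (x, y) \<partial>\<nu> \<partial>\<mu>)"
    by (simp add: emeasure_density M2.nn_integral_fst[symmetric])
  also have "\<dots> = (\<integral>\<^sup>+x\<in>A. emeasure (section_kernel \<nu> f x) B \<partial>\<mu>)"
    by (rule nn_integral_cong_AE, use row in eventually_elim)
      (auto simp: section_kernel_def emeasure_density indicator_times intro!: nn_integral_cong
        split: split_indicator)
  finally show "emeasure (density (\<mu> \<Otimes>\<^sub>M \<nu>) (\<lambda>z. ennreal (f z))) (A \<times> B)
      = (\<integral>\<^sup>+x\<in>A. emeasure (section_kernel \<nu> f x) B \<partial>\<mu>)" .
qed

lemma integral_section_kernel:
  assumes f[measurable]: "f \<in> borel_measurable (\<mu> \<Otimes>\<^sub>M \<nu>)" and f_nonneg: "\<And>z. 0 \<le> f z"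
    and row: "AE x in \<mu>. (\<integral>\<^sup>+y. ennreal (f (x, y)) \<partial>\<nu>) = 1"
    and g: "\<And>x. g x \<in> borel_measurable borel"
  shows "AE x in \<mu>. (\<integral>y. g x y \<partial>section_kernel \<nu> f x) = (\<integral>y. f (x, y) * g x y \<partial>\<nu>)"
  using row
proof eventually_elim
  case (elim x)
  have [measurable]: "g x \<in> borel_measurable \<nu>"
    using g by (simp add: measurable_cong_sets[OF sets_\<nu> refl])
  show ?case
    using elim by (simp add: section_kernel_def integral_density f_nonneg)
qed

lemma coupling_eq_density_RN_deriv:
  assumes coupling: "is_coupling \<mu> \<nu> \<pi>" and ac: "absolutely_continuous (\<mu> \<Otimes>\<^sub>M \<nu>) \<pi>"
  shows "\<pi> = density (\<mu> \<Otimes>\<^sub>M \<nu>) (\<lambda>z. ennreal (enn2real (RN_deriv (\<mu> \<Otimes>\<^sub>M \<nu>) \<pi> z)))"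
proof -
  have sets_\<pi>: "sets \<pi> = sets (\<mu> \<Otimes>\<^sub>M \<nu>)"
    using coupling by (simp add: is_coupling_def sets_pair)
  have "AE z in \<mu> \<Otimes>\<^sub>M \<nu>. RN_deriv (\<mu> \<Otimes>\<^sub>M \<nu>) \<pi> z \<noteq> \<infinity>"
    using coupling by (intro RN_deriv_finite[OF _ ac sets_\<pi>])
      (simp add: is_coupling_def prob_space_imp_sigma_finite)
  then have "density (\<mu> \<Otimes>\<^sub>M \<nu>) (RN_deriv (\<mu> \<Otimes>\<^sub>M \<nu>) \<pi>)
      = density (\<mu> \<Otimes>\<^sub>M \<nu>) (\<lambda>z. ennreal (enn2real (RN_deriv (\<mu> \<Otimes>\<^sub>M \<nu>) \<pi> z)))"
    by (intro density_cong) (auto elim!: eventually_mono simp: less_top)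
  then show ?thesis
    using density_RN_deriv[OF ac sets_\<pi>] by simp
qed

context
  fixes p :: "real \<times> real \<Rightarrow> real" and P :: "(real \<times> real) measure"
  assumes p[measurable]: "p \<in> borel_measurable (\<mu> \<Otimes>\<^sub>M \<nu>)"
    and P_eq: "P = density (\<mu> \<Otimes>\<^sub>M \<nu>) (\<lambda>z. ennreal (p z))"
    and coupling: "is_coupling \<mu> \<nu> P"
begin

lemma density_coupling_col:
  "AE y in \<nu>. (\<integral>\<^sup>+x. ennreal (p (x, y)) \<partial>\<mu>) = 1"
proof (rule M2.density_unique2)
  fix B assume "B \<in> sets \<nu>"
  then have B: "B \<in> sets borel" by (simp add: sets_\<nu>)
  have "(\<integral>\<^sup>+y\<in>B. (\<integral>\<^sup>+x. ennreal (p (x, y)) \<partial>\<mu>) \<partial>\<nu>) = emeasure (distr P borel snd) B"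
    using emeasure_distr_snd_density[OF p B] by (simp add: P_eq)
  also have "\<dots> = (\<integral>\<^sup>+y\<in>B. 1 \<partial>\<nu>)"
    using coupling B by (simp add: is_coupling_def sets_\<nu>)
  finally show "(\<integral>\<^sup>+y\<in>B. (\<integral>\<^sup>+x. ennreal (p (x, y)) \<partial>\<mu>) \<partial>\<nu>) = (\<integral>\<^sup>+y\<in>B. 1 \<partial>\<nu>)" .
qed simp_all

context
  fixes K :: "real \<Rightarrow> real measure"
  assumes disintegration: "is_disintegration \<mu> K P"
begin

lemma kernel_subprob_algebra: "K \<in> \<mu> \<rightarrow>\<^sub>M subprob_algebra borel"
  using disintegration by (auto simp: is_disintegration_def intro: measurable_prob_algebraD)

lemma nn_integral_density_section:
  assumes h[measurable]: "h \<in> borel_measurable (borel \<Otimes>\<^sub>M borel)"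
  shows "AE x in \<mu>. (\<integral>\<^sup>+y. ennreal (p (x, y)) * h (x, y) \<partial>\<nu>) = (\<integral>\<^sup>+y. h (x, y) \<partial>K x)"
proof (rule M1.density_unique2)
  show "(\<lambda>x. \<integral>\<^sup>+y. h (x, y) \<partial>K x) \<in> borel_measurable \<mu>"
    by (rule nn_integral_measurable_subprob_algebra2[OF _ kernel_subprob_algebra]) measurable
  fix A assume "A \<in> sets \<mu>"
  then have [measurable]: "A \<in> sets borel" by (simp add: sets_\<mu>)
  have "(\<integral>\<^sup>+x\<in>A. (\<integral>\<^sup>+y. ennreal (p (x, y)) * h (x, y) \<partial>\<nu>) \<partial>\<mu>)
      = (\<integral>\<^sup>+z. indicator A (fst z) * h z \<partial>P)"
    by (simp add: P_eq nn_integral_density_pair nn_integral_multc nn_integral_cmult ac_simps)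
  also have "\<dots> = (\<integral>\<^sup>+x\<in>A. (\<integral>\<^sup>+y. h (x, y) \<partial>K x) \<partial>\<mu>)"
    using coupling
    by (subst nn_integral_disintegration[OF disintegration sets_\<mu>])
      (auto simp: is_coupling_def prob_space_def intro!: nn_integral_cong split: split_indicator)
  finally show "(\<integral>\<^sup>+x\<in>A. (\<integral>\<^sup>+y. ennreal (p (x, y)) * h (x, y) \<partial>\<nu>) \<partial>\<mu>)
      = (\<integral>\<^sup>+x\<in>A. (\<integral>\<^sup>+y. h (x, y) \<partial>K x) \<partial>\<mu>)" .
qed simp

lemma density_disintegration_row:
  "AE x in \<mu>. (\<integral>\<^sup>+y. ennreal (p (x, y)) \<partial>\<nu>) = 1"
proof -
  have "AE x in \<mu>. (\<integral>\<^sup>+y. ennreal (p (x, y)) * 1 \<partial>\<nu>) = (\<integral>\<^sup>+y. 1 \<partial>K x)"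
    by (rule nn_integral_density_section) simp
  moreover have "AE x in \<mu>. prob_space (K x)"
    using disintegration measurable_space[of K \<mu> "prob_algebra borel"]
    by (auto simp: is_disintegration_def space_prob_algebra)
  ultimately show ?thesis
    by eventually_elim (simp add: prob_space.emeasure_space_1)
qed

text \<open>The drift is transported through its positive and negative parts, because integrability
  with respect to \<open>\<nu>\<close> is part of the conclusion of \<open>density_martingale\<close>.\<close>

lemma AE_nn_integral_density_drift:
  assumes p_nonneg: "\<And>z. 0 \<le> p z"
  shows "AE x in \<mu>. (\<integral>\<^sup>+y. ennreal ((y - x) * p (x, y)) \<partial>\<nu>) = (\<integral>\<^sup>+y. ennreal (y - x) \<partial>K x)"
    and "AE x in \<mu>. (\<integral>\<^sup>+y. ennreal (- ((y - x) * p (x, y))) \<partial>\<nu>)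
      = (\<integral>\<^sup>+y. ennreal (- (y - x)) \<partial>K x)"
proof -
  have ennreal_p: "ennreal (p z) * ennreal t = ennreal (t * p z)" for z t
    by (subst ennreal_mult''[OF p_nonneg]) (rule mult.commute)
  have "(\<lambda>z. ennreal (snd z - fst z)) \<in> borel_measurable (borel \<Otimes>\<^sub>M borel)"
    by measurable
  from nn_integral_density_section[OF this]
  show "AE x in \<mu>. (\<integral>\<^sup>+y. ennreal ((y - x) * p (x, y)) \<partial>\<nu>) = (\<integral>\<^sup>+y. ennreal (y - x) \<partial>K x)"
    by (simp add: ennreal_p)
  have "(\<lambda>z. ennreal (- (snd z - fst z))) \<in> borel_measurable (borel \<Otimes>\<^sub>M borel)"
    by measurable
  from nn_integral_density_section[OF this]
  show "AE x in \<mu>. (\<integral>\<^sup>+y. ennreal (- ((y - x) * p (x, y))) \<partial>\<nu>)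
      = (\<integral>\<^sup>+y. ennreal (- (y - x)) \<partial>K x)"
    using minus_mult_left[of "y - x" "p (x, y)" for x y] by (simp add: ennreal_p)
qed

lemma density_martingale:
  assumes p_nonneg: "\<And>z. 0 \<le> p z"
    and martingale: "AE x in \<mu>. integrable (K x) (\<lambda>y. y - x) \<and> (\<integral>y. (y - x) \<partial>K x) = 0"
  shows "AE x in \<mu>. integrable \<nu> (\<lambda>y. (y - x) * p (x, y)) \<and> (\<integral>y. (y - x) * p (x, y) \<partial>\<nu>) = 0"
  using martingale AE_space AE_nn_integral_density_drift[OF p_nonneg]
proof eventually_elim
  case (elim x)
  have "sets (K x) = sets borel"
    using sets_kernel[OF kernel_subprob_algebra elim(2)] .
  then have "(\<lambda>y. y - x) \<in> borel_measurable (K x)"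
    unfolding measurable_cong_sets[OF _ refl] by simp
  from integrable_integral_eq_0_iff[OF this] elim(1)
  have K: "(\<integral>\<^sup>+y. ennreal (y - x) \<partial>K x) = (\<integral>\<^sup>+y. ennreal (- (y - x)) \<partial>K x)"
    "(\<integral>\<^sup>+y. ennreal (y - x) \<partial>K x) \<noteq> \<infinity>"
    by blast+
  have "(\<lambda>y. (y - x) * p (x, y)) \<in> borel_measurable \<nu>"
    by measurable
  moreover have "(\<integral>\<^sup>+y. ennreal ((y - x) * p (x, y)) \<partial>\<nu>)
      = (\<integral>\<^sup>+y. ennreal (- ((y - x) * p (x, y))) \<partial>\<nu>)"
    by (simp only: elim(3) elim(4) K(1))
  moreover have "(\<integral>\<^sup>+y. ennreal ((y - x) * p (x, y)) \<partial>\<nu>) \<noteq> \<infinity>"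
    by (subst elim(3)) (rule K(2))
  ultimately show ?case
    using integrable_integral_eq_0_iff by blast
qed
end

end

end

section \<open>Moving mass in a positive martingale density\<close>

locale positive_martingale_density = real_pair_prob_space +
  fixes p :: "real \<times> real \<Rightarrow> real"
  assumes p_measurable[measurable]: "p \<in> borel_measurable (\<mu> \<Otimes>\<^sub>M \<nu>)"
    and p_nonneg: "\<And>z. 0 \<le> p z"
    and AE_p_pos: "AE z in \<mu> \<Otimes>\<^sub>M \<nu>. 0 < p z"
    and nn_integral_row: "AE x in \<mu>. (\<integral>\<^sup>+y. ennreal (p (x, y)) \<partial>\<nu>) = 1"
    and nn_integral_col: "AE y in \<nu>. (\<integral>\<^sup>+x. ennreal (p (x, y)) \<partial>\<mu>) = 1"
    and martingale: "AE x in \<mu>. integrable \<nu> (\<lambda>y. (y - x) * p (x, y)) \<and> (\<integral>y. (y - x) * p (x, y) \<partial>\<nu>) = 0"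
    and integrable_\<nu>: "integrable \<nu> (\<lambda>y. y)"
    and \<mu>_not_AE_nonneg: "\<not> (AE x in \<mu>. 0 \<le> x)"
    and \<mu>_not_AE_nonpos: "\<not> (AE x in \<mu>. x \<le> 0)"
begin

lemma row_integral: "AE x in \<mu>. integrable \<nu> (\<lambda>y. p (x, y)) \<and> (\<integral>y. p (x, y) \<partial>\<nu>) = 1"
  using nn_integral_row
proof eventually_elim
  case (elim x)
  then show ?case
    using nn_integral_eq_integrable[OF measurable_section_snd[OF p_measurable], of x 1]
    by (simp add: p_nonneg)
qed

lemma col_integral: "AE y in \<nu>. integrable \<mu> (\<lambda>x. p (x, y)) \<and> (\<integral>x. p (x, y) \<partial>\<mu>) = 1"
  using nn_integral_col
proof eventually_elim
  case (elim y)
  then show ?case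
    using nn_integral_eq_integrable[OF measurable_section_fst[OF p_measurable], of y 1]
    by (simp add: p_nonneg)
qed

lemma integrable_p: "integrable (\<mu> \<Otimes>\<^sub>M \<nu>) p"
proof (rule integrableI_nn_integral_finite[where x = 1])
  have "(\<integral>\<^sup>+z. ennreal (p z) \<partial>\<mu> \<Otimes>\<^sub>M \<nu>) = (\<integral>\<^sup>+x. \<integral>\<^sup>+y. ennreal (p (x, y)) \<partial>\<nu> \<partial>\<mu>)"
    by (rule M2.nn_integral_fst[symmetric]) simp
  also have "\<dots> = (\<integral>\<^sup>+x. 1 \<partial>\<mu>)"
    by (rule nn_integral_cong_AE) (use nn_integral_row in \<open>auto elim!: eventually_mono\<close>)
  finally show "(\<integral>\<^sup>+z. ennreal (p z) \<partial>\<mu> \<Otimes>\<^sub>M \<nu>) = ennreal 1"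
    by (simp add: M1.emeasure_space_1)
qed (simp_all add: p_nonneg)

lemma row_mean: "AE x in \<mu>. integrable \<nu> (\<lambda>y. y * p (x, y)) \<and> (\<integral>y. y * p (x, y) \<partial>\<nu>) = x"
  using martingale row_integral
proof eventually_elim
  case (elim x)
  have "(\<lambda>y. y * p (x, y)) = (\<lambda>y. (y - x) * p (x, y) + x * p (x, y))"
    by (simp add: fun_eq_iff algebra_simps)
  with elim show ?case
    by simp
qed

lemma \<nu>_not_AE_nonneg: "\<not> (AE y in \<nu>. 0 \<le> y)"
proof
  assume nonneg: "AE y in \<nu>. 0 \<le> y"
  have "AE x in \<mu>. 0 \<le> x"
    using row_mean
  proof eventually_elim
    case (elim x)
    have "0 \<le> (\<integral>y. y * p (x, y) \<partial>\<nu>)"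
      using nonneg by (intro integral_nonneg_AE) (auto simp: p_nonneg elim!: eventually_mono)
    with elim show ?case
      by simp
  qed
  with \<mu>_not_AE_nonneg show False ..
qed

lemma \<nu>_not_AE_nonpos: "\<not> (AE y in \<nu>. y \<le> 0)"
proof
  assume nonpos: "AE y in \<nu>. y \<le> 0"
  have "AE x in \<mu>. x \<le> 0"
    using row_mean
  proof eventually_elim
    case (elim x)
    have "0 \<le> (\<integral>y. - (y * p (x, y)) \<partial>\<nu>)"
      using nonpos by (intro integral_nonneg_AE) (auto simp: p_nonneg mult_nonpos_nonneg elim!: eventually_mono)
    with elim show ?case
      by simp
  qed
  with \<mu>_not_AE_nonpos show False ..
qed

text \<open>For \<open>\<pi> = p (\<mu> \<Otimes> \<nu>)\<close>: \<open>row_mass T x = \<pi>\<^sub>x(T)\<close>, \<open>col_mass S y\<close> is the density of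
  \<open>\<pi>(S \<times> dy)\<close> with respect to \<open>\<nu>\<close>, and \<open>corner_mass S T = \<pi>(S \<times> T)\<close>.\<close>

definition row_mass :: "real set \<Rightarrow> real \<Rightarrow> real" where
  "row_mass T x = (\<integral>y. p (x, y) * indicator T y \<partial>\<nu>)"

definition col_mass :: "real set \<Rightarrow> real \<Rightarrow> real" where
  "col_mass S y = (\<integral>x. p (x, y) * indicator S x \<partial>\<mu>)"

definition corner_mass :: "real set \<Rightarrow> real set \<Rightarrow> real" where
  "corner_mass S T = (\<integral>y. col_mass S y * indicator T y \<partial>\<nu>)"

lemma row_mass_measurable[measurable]:
  assumes [measurable]: "T \<in> sets borel"
  shows "row_mass T \<in> borel_measurable \<mu>"
  unfolding row_mass_def by measurable

lemma col_mass_measurable[measurable]: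
  assumes [measurable]: "S \<in> sets borel"
  shows "col_mass S \<in> borel_measurable \<nu>"
proof -
  have "(\<lambda>(y, x). p (x, y)) \<in> borel_measurable (\<nu> \<Otimes>\<^sub>M \<mu>)"
    using measurable_pair_swap[OF p_measurable] by (simp add: case_prod_beta')
  then have "(\<lambda>(y, x). p (x, y) * indicator S x) \<in> borel_measurable (\<nu> \<Otimes>\<^sub>M \<mu>)"
    by measurable
  then show ?thesis
    unfolding col_mass_def by (rule M1.borel_measurable_lebesgue_integral)
qed

lemma row_mass_nonneg: "0 \<le> row_mass T x"
  unfolding row_mass_def by (intro integral_nonneg_AE) (simp add: p_nonneg)

lemma col_mass_nonneg: "0 \<le> col_mass S y"
  unfolding col_mass_def by (intro integral_nonneg_AE) (simp add: p_nonneg)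

lemma corner_mass_nonneg: "0 \<le> corner_mass S T"
  unfolding corner_mass_def by (intro integral_nonneg_AE) (simp add: col_mass_nonneg)

lemma AE_row_mass_le_one: "AE x in \<mu>. row_mass T x \<le> 1"
  using row_integral
proof eventually_elim
  case (elim x)
  then have "row_mass T x \<le> (\<integral>y. p (x, y) \<partial>\<nu>)"
    unfolding row_mass_def by (intro integral_mono_AE') (auto simp: p_nonneg indicator_def)
  with elim show ?case
    by simp
qed

lemma AE_col_mass_le_one: "AE y in \<nu>. col_mass S y \<le> 1"
  using col_integral
proof eventually_elim
  case (elim y)
  then have "col_mass S y \<le> (\<integral>x. p (x, y) \<partial>\<mu>)"
    unfolding col_mass_def by (intro integral_mono_AE') (auto simp: p_nonneg indicator_def)
  with elim show ?case
    by simp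
qed

lemma corner_mass_le_one: "corner_mass S T \<le> 1"
proof -
  have "AE y in \<nu>. col_mass S y * indicator T y \<le> 1"
    using AE_col_mass_le_one[of S] by eventually_elim (simp add: indicator_def)
  then have "corner_mass S T \<le> (\<integral>y. 1 \<partial>\<nu>)"
    unfolding corner_mass_def by (intro integral_mono_AE') auto
  then show ?thesis
    by (simp add: M2.prob_space)
qed

lemma integrable_row_mass: "T \<in> sets borel \<Longrightarrow> integrable \<mu> (row_mass T)"
  by (rule M1.integrable_const_bound[where B = 1])
    (use AE_row_mass_le_one in \<open>auto simp: row_mass_nonneg elim!: eventually_mono\<close>)

lemma integrable_col_mass: "S \<in> sets borel \<Longrightarrow> integrable \<nu> (col_mass S)"
  by (rule M2.integrable_const_bound[where B = 1])
    (use AE_col_mass_le_one in \<open>auto simp: col_mass_nonneg elim!: eventually_mono\<close>)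

lemma integrable_moment_col_mass:
  assumes [measurable]: "S \<in> sets borel"
  shows "integrable \<nu> (\<lambda>y. y * col_mass S y)"
proof (rule Bochner_Integration.integrable_bound[OF integrable_\<nu>])
  show "AE y in \<nu>. norm (y * col_mass S y) \<le> norm y"
    using AE_col_mass_le_one
    by eventually_elim (auto simp: abs_mult col_mass_nonneg intro: mult_left_le)
qed measurable

lemma integral_row_mass:
  assumes [measurable]: "S \<in> sets borel" "T \<in> sets borel"
  shows "(\<integral>x. row_mass T x * indicator S x \<partial>\<mu>) = corner_mass S T"
proof -
  have "integrable (\<mu> \<Otimes>\<^sub>M \<nu>) (\<lambda>(x, y). p (x, y) * indicator T y * indicator S x)"
    by (rule Bochner_Integration.integrable_bound[OF integrable_p]) (auto simp: p_nonneg indicator_def)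
  then have "(\<integral>x. \<integral>y. p (x, y) * indicator T y * indicator S x \<partial>\<nu> \<partial>\<mu>)
      = (\<integral>y. \<integral>x. p (x, y) * indicator T y * indicator S x \<partial>\<mu> \<partial>\<nu>)"
    by (rule Fubini_integral[symmetric])
  moreover have "(\<integral>x. p (x, y) * indicator T y * indicator S x \<partial>\<mu>) = col_mass S y * indicator T y" for y
    unfolding col_mass_def by (subst integral_mult_left_zero[symmetric]) (simp add: mult_ac)
  ultimately show ?thesis
    unfolding row_mass_def corner_mass_def by simp
qed

lemma AE_col_mass_add_compl:
  assumes [measurable]: "S \<in> sets borel"
  shows "AE y in \<nu>. col_mass S y + col_mass (- S) y = 1"
  using col_integral
proof eventually_elim
  case (elim y)
  then have "col_mass S y + col_mass (- S) y
      = (\<integral>x. p (x, y) * indicator S x + p (x, y) * indicator (- S) x \<partial>\<mu>)"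
    unfolding col_mass_def by (intro Bochner_Integration.integral_add[symmetric] integrable_real_mult_indicator) auto
  also have "\<dots> = (\<integral>x. p (x, y) \<partial>\<mu>)"
    by (intro Bochner_Integration.integral_cong) (auto simp: indicator_def)
  finally show ?case
    using elim by simp
qed

lemma AE_row_mass_pos:
  assumes [measurable]: "T \<in> sets borel" and charged: "\<not> (AE y in \<nu>. y \<notin> T)"
  shows "AE x in \<mu>. 0 < row_mass T x"
  using AE_pair[OF AE_p_pos] row_integral
proof eventually_elim
  case (elim x)
  show ?case
    unfolding row_mass_def
  proof (rule integral_pos_of_not_AE_eq_0)
    show "integrable \<nu> (\<lambda>y. p (x, y) * indicator T y)"
      using elim by (intro integrable_real_mult_indicator) auto
    show "AE y in \<nu>. 0 \<le> p (x, y) * indicator T y"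
      by (simp add: p_nonneg)
    show "\<not> (AE y in \<nu>. p (x, y) * indicator T y = 0)"
    proof
      assume "AE y in \<nu>. p (x, y) * indicator T y = 0"
      with elim(1) have "AE y in \<nu>. y \<notin> T"
        by eventually_elim (auto simp: indicator_def)
      with charged show False ..
    qed
  qed
qed

lemma AE_col_mass_pos:
  assumes [measurable]: "S \<in> sets borel" and charged: "\<not> (AE x in \<mu>. x \<notin> S)"
  shows "AE y in \<nu>. 0 < col_mass S y"
proof -
  have "{z \<in> space (\<mu> \<Otimes>\<^sub>M \<nu>). 0 < p (fst z, snd z)} \<in> sets (\<mu> \<Otimes>\<^sub>M \<nu>)"
    by measurable
  then have "AE y in \<nu>. AE x in \<mu>. 0 < p (x, y)"
    using AE_commute[of "\<lambda>x y. 0 < p (x, y)"] AE_pair[OF AE_p_pos] by simp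
  then show ?thesis
    using col_integral
  proof eventually_elim
    case (elim y)
    show ?case
      unfolding col_mass_def
    proof (rule integral_pos_of_not_AE_eq_0)
      show "integrable \<mu> (\<lambda>x. p (x, y) * indicator S x)"
        using elim by (intro integrable_real_mult_indicator) auto
      show "AE x in \<mu>. 0 \<le> p (x, y) * indicator S x"
        by (simp add: p_nonneg)
      show "\<not> (AE x in \<mu>. p (x, y) * indicator S x = 0)"
      proof
        assume "AE x in \<mu>. p (x, y) * indicator S x = 0"
        with elim(1) have "AE x in \<mu>. x \<notin> S"
          by eventually_elim (auto simp: indicator_def)
        with charged show False ..
      qed
    qed
  qed
qed

definition transfer_density :: "real set \<Rightarrow> real set \<Rightarrow> real \<times> real \<Rightarrow> real" where
  "transfer_density S T z = p z * (1 - corner_mass (- S) (- T) * indicator T (snd z))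
    + row_mass T (fst z) * col_mass (- S) (snd z) * indicator (- T) (snd z)"

lemma transfer_density_measurable[measurable]:
  assumes [measurable]: "S \<in> sets borel" "T \<in> sets borel"
  shows "transfer_density S T \<in> borel_measurable (\<mu> \<Otimes>\<^sub>M \<nu>)"
  unfolding transfer_density_def by measurable

lemma transfer_density_nonneg: "0 \<le> transfer_density S T z"
proof -
  have "0 \<le> 1 - corner_mass (- S) (- T) * indicator T (snd z)"
    using corner_mass_le_one[of "- S" "- T"] by (simp add: indicator_def)
  then show ?thesis
    unfolding transfer_density_def
    by (intro add_nonneg_nonneg mult_nonneg_nonneg p_nonneg row_mass_nonneg col_mass_nonneg) simp_all
qed

lemma AE_transfer_density_le:
  assumes [measurable]: "S \<in> sets borel" "T \<in> sets borel"
  shows "AE z in \<mu> \<Otimes>\<^sub>M \<nu>. transfer_density S T z \<le> p z + 1"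
proof (rule AE_pair_measure)
  have "(\<lambda>z. p z + 1) \<in> borel_measurable (\<mu> \<Otimes>\<^sub>M \<nu>)"
    by measurable
  with transfer_density_measurable[OF assms]
  show "{z \<in> space (\<mu> \<Otimes>\<^sub>M \<nu>). transfer_density S T z \<le> p z + 1} \<in> sets (\<mu> \<Otimes>\<^sub>M \<nu>)"
    by (rule borel_measurable_le)
  show "AE x in \<mu>. AE y in \<nu>. transfer_density S T (x, y) \<le> p (x, y) + 1"
    using AE_row_mass_le_one[of T]
  proof eventually_elim
    case row: (elim x)
    show ?case
      using AE_col_mass_le_one[of "- S"]
    proof eventually_elim
      case col: (elim y)
      have "p (x, y) * (1 - corner_mass (- S) (- T) * indicator T y) \<le> p (x, y)"
        using corner_mass_nonneg[of "- S" "- T"] p_nonneg[of "(x, y)"]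
        by (intro mult_left_le) (auto simp: indicator_def)
      moreover have "row_mass T x * col_mass (- S) y * indicator (- T) y \<le> 1"
        using row col by (intro mult_le_one) (auto simp: row_mass_nonneg col_mass_nonneg)
      ultimately show ?case
        unfolding transfer_density_def fst_conv snd_conv by (rule add_mono)
    qed
  qed
qed

lemma transfer_density_row:
  assumes [measurable]: "S \<in> sets borel" "T \<in> sets borel"
  shows "AE x in \<mu>. integrable \<nu> (\<lambda>y. transfer_density S T (x, y))
    \<and> (\<integral>y. transfer_density S T (x, y) \<partial>\<nu>) = 1"
  using row_integral
proof eventually_elim
  case (elim x)
  let ?c = "corner_mass (- S) (- T)"
  have eq: "transfer_density S T (x, y) = p (x, y) - ?c * (p (x, y) * indicator T y)
      + row_mass T x * (col_mass (- S) y * indicator (- T) y)" for y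
    by (simp add: transfer_density_def algebra_simps)
  have "integrable \<nu> (\<lambda>y. p (x, y) * indicator T y)"
    "integrable \<nu> (\<lambda>y. col_mass (- S) y * indicator (- T) y)"
    using elim by (auto intro!: integrable_real_mult_indicator integrable_col_mass)
  with elim show ?case
    by (simp add: eq row_mass_def[symmetric] corner_mass_def[symmetric])
qed

lemma transfer_density_col:
  assumes [measurable]: "S \<in> sets borel" "T \<in> sets borel"
  shows "AE y in \<nu>. integrable \<mu> (\<lambda>x. transfer_density S T (x, y) * indicator S x)
    \<and> (\<integral>x. transfer_density S T (x, y) * indicator S x \<partial>\<mu>)
      = col_mass S y * (1 - corner_mass (- S) (- T) * indicator T y)
        + corner_mass S T * col_mass (- S) y * indicator (- T) y"
  using col_integral
proof eventually_elim
  case (elim y)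
  have eq: "transfer_density S T (x, y) * indicator S x
      = (1 - corner_mass (- S) (- T) * indicator T y) * (p (x, y) * indicator S x)
        + col_mass (- S) y * indicator (- T) y * (row_mass T x * indicator S x)" for x
    by (simp add: transfer_density_def algebra_simps)
  have "integrable \<mu> (\<lambda>x. p (x, y) * indicator S x)" "integrable \<mu> (\<lambda>x. row_mass T x * indicator S x)"
    using elim by (auto intro!: integrable_real_mult_indicator integrable_row_mass)
  with elim show ?case
    by (simp add: eq col_mass_def[symmetric] integral_row_mass)
qed

lemma transfer_density_drift:
  assumes [measurable]: "S \<in> sets borel" "T \<in> sets borel"
  shows "AE x in \<mu>. integrable \<nu> (\<lambda>y. (y - x) * transfer_density S T (x, y))
    \<and> (\<integral>y. (y - x) * transfer_density S T (x, y) \<partial>\<nu>)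
      = row_mass T x * (\<integral>y. y * col_mass (- S) y * indicator (- T) y \<partial>\<nu>)
        - corner_mass (- S) (- T) * (\<integral>y. y * p (x, y) * indicator T y \<partial>\<nu>)"
  using martingale row_integral row_mean
proof eventually_elim
  case (elim x)
  let ?c = "corner_mass (- S) (- T)"
  have eq: "(y - x) * transfer_density S T (x, y)
      = (y - x) * p (x, y) - ?c * (y * p (x, y) * indicator T y) + ?c * x * (p (x, y) * indicator T y)
        + row_mass T x * (y * col_mass (- S) y * indicator (- T) y)
        - row_mass T x * x * (col_mass (- S) y * indicator (- T) y)" for y
    by (simp add: transfer_density_def indicator_def algebra_simps)
  have "integrable \<nu> (\<lambda>y. y * p (x, y) * indicator T y)" "integrable \<nu> (\<lambda>y. p (x, y) * indicator T y)"
    "integrable \<nu> (\<lambda>y. y * col_mass (- S) y * indicator (- T) y)"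
    "integrable \<nu> (\<lambda>y. col_mass (- S) y * indicator (- T) y)"
    using elim by (auto intro!: integrable_real_mult_indicator integrable_col_mass integrable_moment_col_mass)
  with elim show ?case
    by (simp add: eq row_mass_def[symmetric] corner_mass_def[symmetric])
qed

definition split_density :: "real set \<Rightarrow> real set \<Rightarrow> real \<times> real \<Rightarrow> real" where
  "split_density S T z =
    (if fst z \<in> S then transfer_density S T z else transfer_density (- S) (- T) z)"

lemma split_density_measurable[measurable]:
  assumes [measurable]: "S \<in> sets borel" "T \<in> sets borel"
  shows "split_density S T \<in> borel_measurable (\<mu> \<Otimes>\<^sub>M \<nu>)"
  unfolding split_density_def by measurable

lemma split_density_nonneg: "0 \<le> split_density S T z"
  by (simp add: split_density_def transfer_density_nonneg)

lemma AE_split_density_le: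
  assumes S: "S \<in> sets borel" and T: "T \<in> sets borel"
  shows "AE z in \<mu> \<Otimes>\<^sub>M \<nu>. split_density S T z \<le> p z + 1"
  using AE_transfer_density_le[OF S T] AE_transfer_density_le[OF borel_comp[OF S] borel_comp[OF T]]
  by eventually_elim (simp add: split_density_def)

lemma nn_integral_split_density_row:
  assumes S: "S \<in> sets borel" and T: "T \<in> sets borel"
  shows "AE x in \<mu>. (\<integral>\<^sup>+y. ennreal (split_density S T (x, y)) \<partial>\<nu>) = 1"
  using transfer_density_row[OF S T] transfer_density_row[OF borel_comp[OF S] borel_comp[OF T]]
proof eventually_elim
  case (elim x)
  then have "integrable \<nu> (\<lambda>y. split_density S T (x, y)) \<and> (\<integral>y. split_density S T (x, y) \<partial>\<nu>) = 1"
    by (cases "x \<in> S") (simp_all add: split_density_def)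
  then show ?case
    using nn_integral_eq_integrable[OF measurable_section_snd[OF split_density_measurable[OF S T]], of x 1]
    by (simp add: split_density_nonneg)
qed

lemma nn_integral_split_density_col:
  assumes S: "S \<in> sets borel" and T: "T \<in> sets borel"
  shows "AE y in \<nu>. (\<integral>\<^sup>+x. ennreal (split_density S T (x, y)) \<partial>\<mu>) = 1"
  using transfer_density_col[OF S T] transfer_density_col[OF borel_comp[OF S] borel_comp[OF T]] AE_col_mass_add_compl[OF S]
proof eventually_elim
  case (elim y)
  have eq: "split_density S T (x, y)
      = transfer_density S T (x, y) * indicator S x + transfer_density (- S) (- T) (x, y) * indicator (- S) x"
    for x
    by (simp add: split_density_def indicator_def)
  have "integrable \<mu> (\<lambda>x. split_density S T (x, y)) \<and> (\<integral>x. split_density S T (x, y) \<partial>\<mu>) = 1"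
    using elim by (simp add: eq algebra_simps)
  then show ?case
    using nn_integral_eq_integrable[OF measurable_section_fst[OF split_density_measurable[OF S T]], of y 1]
    by (simp add: split_density_nonneg)
qed

lemma upper_moment_col_mass_pos: "0 < (\<integral>y. y * col_mass {..<0} y * indicator {0<..} y \<partial>\<nu>)"
proof -
  have "AE y in \<nu>. 0 < col_mass {..<0} y"
    using \<mu>_not_AE_nonneg by (intro AE_col_mass_pos) (simp_all add: not_less)
  then show ?thesis
  proof (intro integral_pos_of_not_AE_eq_0 notI)
    show "integrable \<nu> (\<lambda>y. y * col_mass {..<0} y * indicator {0<..} y)"
      by (intro integrable_real_mult_indicator integrable_moment_col_mass) simp_all
    show "AE y in \<nu>. 0 \<le> y * col_mass {..<0} y * indicator {0<..} y"
      by (simp add: indicator_def col_mass_nonneg)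
    assume "AE y in \<nu>. 0 < col_mass {..<0} y" "AE y in \<nu>. y * col_mass {..<0} y * indicator {0<..} y = 0"
    then have "AE y in \<nu>. y \<le> 0"
      by eventually_elim (auto simp: indicator_def)
    with \<nu>_not_AE_nonpos show False ..
  qed
qed

lemma lower_moment_col_mass_neg: "(\<integral>y. y * col_mass {0..} y * indicator {..0} y \<partial>\<nu>) < 0"
proof -
  have \<mu>_not_AE_neg: "\<not> (AE x in \<mu>. x < 0)"
  proof
    assume "AE x in \<mu>. x < 0"
    then have "AE x in \<mu>. x \<le> 0" by eventually_elim simp
    with \<mu>_not_AE_nonpos show False ..
  qed
  have "AE y in \<nu>. 0 < col_mass {0..} y"
    using \<mu>_not_AE_neg by (intro AE_col_mass_pos) (simp_all add: not_le)
  then have "0 < (\<integral>y. - (y * col_mass {0..} y * indicator {..0} y) \<partial>\<nu>)"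
  proof (intro integral_pos_of_not_AE_eq_0 notI)
    show "integrable \<nu> (\<lambda>y. - (y * col_mass {0..} y * indicator {..0} y))"
      by (intro integrable_minus integrable_real_mult_indicator integrable_moment_col_mass) simp_all
    show "AE y in \<nu>. 0 \<le> - (y * col_mass {0..} y * indicator {..0} y)"
      by (simp add: indicator_def col_mass_nonneg mult_nonpos_nonneg)
    assume "AE y in \<nu>. 0 < col_mass {0..} y" "AE y in \<nu>. - (y * col_mass {0..} y * indicator {..0} y) = 0"
    then have "AE y in \<nu>. 0 \<le> y"
      by eventually_elim (auto simp: indicator_def)
    with \<nu>_not_AE_nonneg show False ..
  qed
  then show ?thesis
    by simp
qed

lemma AE_split_density_drift:
  "AE x in \<mu>. (0 \<le> x \<longrightarrow> 0 < (\<integral>y. (y - x) * split_density {0..} {..0} (x, y) \<partial>\<nu>))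
    \<and> (x < 0 \<longrightarrow> (\<integral>y. (y - x) * split_density {0..} {..0} (x, y) \<partial>\<nu>) < 0)"
proof -
  have \<nu>_not_AE_pos: "\<not> (AE y in \<nu>. 0 < y)"
  proof
    assume "AE y in \<nu>. 0 < y"
    then have "AE y in \<nu>. 0 \<le> y" by eventually_elim simp
    with \<nu>_not_AE_nonneg show False ..
  qed
  have "AE x in \<mu>. 0 < row_mass {..0} x"
    using \<nu>_not_AE_pos by (intro AE_row_mass_pos) (simp_all add: not_le)
  moreover have "AE x in \<mu>. 0 < row_mass {0<..} x"
    using \<nu>_not_AE_nonpos by (intro AE_row_mass_pos) (simp_all add: not_less)
  moreover have "{0::real..} \<in> sets borel" "{..0::real} \<in> sets borel"
    "{..<0::real} \<in> sets borel" "{0::real<..} \<in> sets borel"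
    by measurable
  note transfer_density_drift[OF this(1,2)] transfer_density_drift[OF this(3,4)]
  ultimately show ?thesis
  proof eventually_elim
    case (elim x)
    let ?L = "\<integral>y. y * p (x, y) * indicator {..0} y \<partial>\<nu>"
    let ?U = "\<integral>y. y * p (x, y) * indicator {0<..} y \<partial>\<nu>"
    have "?L \<le> 0"
      using integral_nonneg_AE[of "\<lambda>y. - (y * p (x, y) * indicator {..0} y)" \<nu>]
      by (simp add: indicator_def p_nonneg mult_nonpos_nonneg)
    then have "corner_mass {..<0} {0<..} * ?L \<le> 0"
      by (intro mult_nonneg_nonpos corner_mass_nonneg)
    have "0 \<le> ?U"
      by (intro integral_nonneg_AE) (simp add: indicator_def p_nonneg)
    then have "0 \<le> corner_mass {0..} {..0} * ?U"
      by (intro mult_nonneg_nonneg corner_mass_nonneg)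
    have "0 < row_mass {..0} x * (\<integral>y. y * col_mass {..<0} y * indicator {0<..} y \<partial>\<nu>)"
      using elim(1) upper_moment_col_mass_pos by simp
    moreover have "row_mass {0<..} x * (\<integral>y. y * col_mass {0..} y * indicator {..0} y \<partial>\<nu>) < 0"
      using elim(2) lower_moment_col_mass_neg by (simp add: mult_pos_neg)
    ultimately show ?case
      using elim(3,4) \<open>corner_mass {..<0} {0<..} * ?L \<le> 0\<close> \<open>0 \<le> corner_mass {0..} {..0} * ?U\<close>
      by (auto simp: split_density_def)
  qed
qed

lemma exists_coupling_with_signed_drift:
  assumes entropy: "(\<integral>\<^sup>+z. ennreal (p z * ln (p z)) \<partial>\<mu> \<Otimes>\<^sub>M \<nu>) < \<infinity>"
  shows "\<exists>P. is_coupling \<mu> \<nu> P \<and> rel_entropy P (\<mu> \<Otimes>\<^sub>M \<nu>) < \<infinity> \<and>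
    (\<exists>K. is_disintegration \<mu> K P \<and>
      (AE x in \<mu>. (x \<ge> 0 \<longrightarrow> (\<integral>y. (y - x) \<partial>K x) > 0) \<and> (x < 0 \<longrightarrow> (\<integral>y. (y - x) \<partial>K x) < 0)))"
proof -
  let ?f = "split_density {0..} {..0}"
  have "{0::real..} \<in> sets borel" "{..0::real} \<in> sets borel"
    by measurable
  note f = split_density_measurable[OF this] and row = nn_integral_split_density_row[OF this]
    and col = nn_integral_split_density_col[OF this] and le = AE_split_density_le[OF this]
  have "rel_entropy (density (\<mu> \<Otimes>\<^sub>M \<nu>) (\<lambda>z. ennreal (?f z))) (\<mu> \<Otimes>\<^sub>M \<nu>) < \<infinity>"
    using rel_entropy_density_less_top_iff[OF finite_measure_pair f split_density_nonneg]
      nn_integral_mult_ln_less_top_of_le[OF finite_measure_pair f p_measurable split_density_nonneg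
        p_nonneg le integrable_p entropy]
    by simp
  moreover have "AE x in \<mu>. (\<integral>y. (y - x) \<partial>section_kernel \<nu> ?f x) = (\<integral>y. ?f (x, y) * (y - x) \<partial>\<nu>)"
    by (rule integral_section_kernel[OF f split_density_nonneg row]) simp
  with AE_split_density_drift
  have "AE x in \<mu>. (x \<ge> 0 \<longrightarrow> (\<integral>y. (y - x) \<partial>section_kernel \<nu> ?f x) > 0)
      \<and> (x < 0 \<longrightarrow> (\<integral>y. (y - x) \<partial>section_kernel \<nu> ?f x) < 0)"
    by eventually_elim (simp add: mult.commute)
  ultimately show ?thesis
    using density_coupling[OF f row col] density_disintegration[OF f row] by blast
qed

end

lemma positive_martingale_density_RN_deriv:
  assumes "real_pair_prob_space \<mu> \<nu>"
    and coupling: "is_coupling \<mu> \<nu> \<pi>" and disintegration: "is_disintegration \<mu> K \<pi>"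
    and martingale: "AE x in \<mu>. integrable (K x) (\<lambda>y. y - x) \<and> (\<integral>y. (y - x) \<partial>K x) = 0"
    and ac: "absolutely_continuous (\<mu> \<Otimes>\<^sub>M \<nu>) \<pi>" "absolutely_continuous \<pi> (\<mu> \<Otimes>\<^sub>M \<nu>)"
    and first_moment: "integrable \<nu> (\<lambda>y. y)"
    and charges: "\<not> (AE x in \<mu>. 0 \<le> x)" "\<not> (AE x in \<mu>. x \<le> 0)"
  shows "positive_martingale_density \<mu> \<nu> (\<lambda>z. enn2real (RN_deriv (\<mu> \<Otimes>\<^sub>M \<nu>) \<pi> z))"
proof -
  interpret real_pair_prob_space \<mu> \<nu> by fact
  let ?p = "\<lambda>z. enn2real (RN_deriv (\<mu> \<Otimes>\<^sub>M \<nu>) \<pi> z)"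
  have p: "?p \<in> borel_measurable (\<mu> \<Otimes>\<^sub>M \<nu>)"
    by measurable
  have \<pi>_eq: "\<pi> = density (\<mu> \<Otimes>\<^sub>M \<nu>) (\<lambda>z. ennreal (?p z))"
    by (rule coupling_eq_density_RN_deriv[OF coupling ac(1)])
  show ?thesis
  proof (rule positive_martingale_density.intro[OF assms(1)],
      rule positive_martingale_density_axioms.intro)
    show "AE z in \<mu> \<Otimes>\<^sub>M \<nu>. 0 < ?p z"
      using ac(2)
      by (intro AE_pos_of_absolutely_continuous_density[OF p]) (simp_all add: \<pi>_eq[symmetric])
    show "AE x in \<mu>. (\<integral>\<^sup>+y. ennreal (?p (x, y)) \<partial>\<nu>) = 1"
      by (rule density_disintegration_row[OF p \<pi>_eq coupling disintegration])
    show "AE y in \<nu>. (\<integral>\<^sup>+x. ennreal (?p (x, y)) \<partial>\<mu>) = 1"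
      by (rule density_coupling_col[OF p \<pi>_eq coupling])
    show "AE x in \<mu>. integrable \<nu> (\<lambda>y. (y - x) * ?p (x, y)) \<and> (\<integral>y. (y - x) * ?p (x, y) \<partial>\<nu>) = 0"
      by (rule density_martingale[OF p \<pi>_eq coupling disintegration _ martingale]) simp
  qed (simp_all add: p first_moment charges)
qed

theorem mainTheorem4:
  fixes \<mu> \<nu> :: "real measure"
  assumes "prob_space \<mu>" and "sets \<mu> = sets borel"
    and "prob_space \<nu>" and "sets \<nu> = sets borel"
    and "integrable \<mu> (\<lambda>x. x)" and "integrable \<nu> (\<lambda>y. y)"
    and "convex_order \<mu> \<nu>"
    and "(\<integral>x. x \<partial>\<mu>) = 0" and "(\<integral>y. y \<partial>\<nu>) = 0"
    and "\<mu> \<noteq> return borel 0"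
    and assumptionA: "\<exists>\<pi>. is_martingale_coupling \<mu> \<nu> \<pi> \<and>
            absolutely_continuous (\<mu> \<Otimes>\<^sub>M \<nu>) \<pi> \<and> absolutely_continuous \<pi> (\<mu> \<Otimes>\<^sub>M \<nu>) \<and>
            rel_entropy \<pi> (\<mu> \<Otimes>\<^sub>M \<nu>) < \<infinity>"
  shows "\<exists>P. is_coupling \<mu> \<nu> P \<and> rel_entropy P (\<mu> \<Otimes>\<^sub>M \<nu>) < \<infinity> \<and>
           (\<exists>K. is_disintegration \<mu> K P \<and>
              (AE x in \<mu>. (x \<ge> 0 \<longrightarrow> (\<integral>y. (y - x) \<partial>K x) > 0) \<and>
                          (x < 0 \<longrightarrow> (\<integral>y. (y - x) \<partial>K x) < 0)))"
proof -
  have "real_pair_prob_space \<mu> \<nu>"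
    using assms(1-4)
    by (simp add: real_pair_prob_space_def real_pair_prob_space_axioms_def pair_prob_space_def
        pair_sigma_finite_def prob_space_imp_sigma_finite)
  then interpret real_pair_prob_space \<mu> \<nu> .
  from assumptionA obtain \<pi> K where coupling: "is_coupling \<mu> \<nu> \<pi>"
    and disintegration: "is_disintegration \<mu> K \<pi>"
    and martingale: "AE x in \<mu>. integrable (K x) (\<lambda>y. y - x) \<and> (\<integral>y. (y - x) \<partial>K x) = 0"
    and ac: "absolutely_continuous (\<mu> \<Otimes>\<^sub>M \<nu>) \<pi>" "absolutely_continuous \<pi> (\<mu> \<Otimes>\<^sub>M \<nu>)"
    and entropy: "rel_entropy \<pi> (\<mu> \<Otimes>\<^sub>M \<nu>) < \<infinity>"
    unfolding is_martingale_coupling_def by blast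
  let ?p = "\<lambda>z. enn2real (RN_deriv (\<mu> \<Otimes>\<^sub>M \<nu>) \<pi> z)"
  interpret positive_martingale_density \<mu> \<nu> ?p
    by (rule positive_martingale_density_RN_deriv[OF \<open>real_pair_prob_space \<mu> \<nu>\<close> coupling
          disintegration martingale ac assms(6) centered_not_AE_nonneg[OF assms(1,2,5,8,10)]])
  from rel_entropy_density_less_top_iff[OF finite_measure_pair p_measurable p_nonneg] entropy
  show ?thesis
    using coupling_eq_density_RN_deriv[OF coupling ac(1)] exists_coupling_with_signed_drift by simp
qed

end
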